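(* There exists an explicit family of triangle-free graphs on $n$ vertices (with $n$ arbitrarily large) where $\overline{\chi}_f\ge n/2$ whereas the broadcast rate satisfies $\beta\le\frac38 n$.
   Context: For an undirected graph $G$ on vertex set $[n]$, consider the index coding problem: a server holds messages $x_1,\dots,x_n\in\Sigma$ ($|\Sigma|>1$), receiver $i$ wants $x_i$ and knows $x_j$ for every neighbor $j$ of $i$. A solution is an encoding $\mathcal{E}:\Sigma^n\to\Sigma_P$ from which each receiver can recover its message given its side information, for all message values. $\beta_t(G)$ is the minimum of $\lceil\log_2|\Sigma_P|\rceil$ over solutions with $|\Sigma|=2^t$, and the broadcast rate is $\beta(G)=\lim_t\beta_t(G)/t=\inf_t\beta_t(G)/t$. $\overline{\chi}_f(G)$ is the fractional clique-cover number: the minimum total weight of a nonnegative weighting of cliques of $G$ covering each vertex with total weight at least $1$. *)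

theory Defs
  imports Complex_Main "HOL-Library.FuncSet"
begin

definition undirected_graph :: "nat \<Rightarrow> (nat \<Rightarrow> nat \<Rightarrow> bool) \<Rightarrow> bool" where
  "undirected_graph n E \<longleftrightarrow>
     (\<forall>i<n. \<forall>j<n. E i j \<longrightarrow> E j i) \<and> (\<forall>i<n. \<not> E i i)"

definition triangle_free :: "nat \<Rightarrow> (nat \<Rightarrow> nat \<Rightarrow> bool) \<Rightarrow> bool" where
  "triangle_free n E \<longleftrightarrow>
     \<not> (\<exists>i<n. \<exists>j<n. \<exists>k<n. E i j \<and> E j k \<and> E i k)"

definition nbrs :: "nat \<Rightarrow> (nat \<Rightarrow> nat \<Rightarrow> bool) \<Rightarrow> nat \<Rightarrow> nat set" where
  "nbrs n E i = {j. j < n \<and> E i j}"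

definition messages :: "nat \<Rightarrow> nat \<Rightarrow> (nat \<Rightarrow> nat) set" where
  "messages n t = {0..<n} \<rightarrow>\<^sub>E {0..<2^t}"

text \<open>The broadcast alphabet Sigma_P is taken to be the image of the encoder
  (inside nat).\<close>
definition ic_solution :: "nat \<Rightarrow> (nat \<Rightarrow> nat \<Rightarrow> bool) \<Rightarrow> nat \<Rightarrow> ((nat \<Rightarrow> nat) \<Rightarrow> nat) \<Rightarrow> bool" where
  "ic_solution n E t enc \<longleftrightarrow>
     (\<forall>i<n. \<exists>dec :: nat \<Rightarrow> (nat \<Rightarrow> nat) \<Rightarrow> nat.
        \<forall>x\<in>messages n t. dec (enc x) (restrict x (nbrs n E i)) = x i)"

definition beta_t :: "nat \<Rightarrow> (nat \<Rightarrow> nat \<Rightarrow> bool) \<Rightarrow> nat \<Rightarrow> nat" where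
  "beta_t n E t = (INF enc \<in> {enc. ic_solution n E t enc}.
       nat \<lceil>log 2 (real (card (enc ` messages n t)))\<rceil>)"

definition broadcast_rate :: "nat \<Rightarrow> (nat \<Rightarrow> nat \<Rightarrow> bool) \<Rightarrow> real" where
  "broadcast_rate n E = (INF t \<in> {1..}. real (beta_t n E t) / real t)"

definition is_clique :: "nat \<Rightarrow> (nat \<Rightarrow> nat \<Rightarrow> bool) \<Rightarrow> nat set \<Rightarrow> bool" where
  "is_clique n E C \<longleftrightarrow> C \<subseteq> {0..<n} \<and> (\<forall>u\<in>C. \<forall>v\<in>C. u \<noteq> v \<longrightarrow> E u v)"

definition cliques :: "nat \<Rightarrow> (nat \<Rightarrow> nat \<Rightarrow> bool) \<Rightarrow> nat set set" where
  "cliques n E = {C. is_clique n E C}"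

definition frac_clique_cover :: "nat \<Rightarrow> (nat \<Rightarrow> nat \<Rightarrow> bool) \<Rightarrow> (nat set \<Rightarrow> real) \<Rightarrow> bool" where
  "frac_clique_cover n E w \<longleftrightarrow>
     (\<forall>C\<in>cliques n E. w C \<ge> 0) \<and>
     (\<forall>v<n. (\<Sum>C\<in>{C\<in>cliques n E. v \<in> C}. w C) \<ge> 1)"

definition frac_clique_cover_number :: "nat \<Rightarrow> (nat \<Rightarrow> nat \<Rightarrow> bool) \<Rightarrow> real" where
  "frac_clique_cover_number n E =
     (INF w \<in> {w. frac_clique_cover n E w}. \<Sum>C\<in>cliques n E. w C)"

end

theory Submission
  imports Defs
begin

text \<open>The graphs are disjoint unions of copies of the Clebsch graph (the folded 5-cube).
  Being triangle-free, they have cliques of size at most two, so every fractional clique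
  cover has weight at least \<open>n/2\<close>. On the other hand, over \<open>GF(2)\<close> the closed
  neighbourhoods of the sixteen vertices of the Clebsch graph span a space of dimension only
  six, spanned by the closed neighbourhoods of the vertices 0, 1, 2, 3, 4, 8. Broadcasting the
  parities of the messages on these six sets lets every receiver compute the parity of the
  messages on its own closed neighbourhood, from which it removes the neighbours it knows.
  This is a code of 6 bits per 16 vertices, whence \<open>\<beta> \<le> 3n/8\<close>.\<close>

lemma card_clique_le_2:
  assumes "triangle_free n E" and "C \<in> cliques n E"
  shows "card C \<le> 2"
proof (rule ccontr)
  assume "\<not> card C \<le> 2"
  then have "3 \<le> card C"
    by simp
  then obtain S where "S \<subseteq> C" and "card S = 3"
    by (rule obtain_subset_with_card_n)
  then obtain a b c where abc: "a \<in> C" "b \<in> C" "c \<in> C" "a \<noteq> b" "b \<noteq> c" "a \<noteq> c"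
    by (auto simp: card_3_iff)
  with assms(2) have "a < n" "b < n" "c < n" "E a b" "E b c" "E a c"
    by (auto simp: cliques_def is_clique_def)
  with assms(1) show False
    unfolding triangle_free_def by blast
qed

lemma frac_clique_cover_ones: "frac_clique_cover n E (\<lambda>_. 1)"
  unfolding frac_clique_cover_def
proof (intro conjI ballI allI impI)
  fix v assume "v < n"
  then have "{v} \<in> {C \<in> cliques n E. v \<in> C}"
    by (auto simp: cliques_def is_clique_def)
  moreover have "finite (cliques n E)"
    by (rule finite_subset[of _ "Pow {0..<n}"]) (auto simp: cliques_def is_clique_def)
  ultimately have "card {C \<in> cliques n E. v \<in> C} \<noteq> 0"
    by auto
  then show "1 \<le> (\<Sum>C\<in>{C \<in> cliques n E. v \<in> C}. (1::real))"
    by simp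
qed simp

lemma frac_clique_cover_weight_ge_half:
  assumes tf: "triangle_free n E" and "frac_clique_cover n E w"
  shows "real n / 2 \<le> (\<Sum>C\<in>cliques n E. w C)"
proof -
  let ?Cl = "cliques n E"
  have finite_cliques: "finite ?Cl"
    by (rule finite_subset[of _ "Pow {0..<n}"]) (auto simp: cliques_def is_clique_def)
  have clique_subset: "C \<subseteq> {0..<n}" if "C \<in> ?Cl" for C
    using that by (auto simp: cliques_def is_clique_def)
  have w_nonneg: "\<forall>C\<in>?Cl. w C \<ge> 0" and w_covers: "\<forall>v<n. (\<Sum>C\<in>{C\<in>?Cl. v \<in> C}. w C) \<ge> 1"
    using assms(2) by (auto simp: frac_clique_cover_def)
  have "real n = (\<Sum>v\<in>{0..<n}. 1)"
    by simp
  also have "\<dots> \<le> (\<Sum>v\<in>{0..<n}. \<Sum>C\<in>{C\<in>?Cl. v \<in> C}. w C)"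
    using w_covers by (intro sum_mono) auto
  also have "\<dots> = (\<Sum>C\<in>?Cl. \<Sum>v\<in>{v\<in>{0..<n}. v \<in> C}. w C)"
    using sum.swap_restrict[OF finite_cliques, of "{0..<n}" "\<lambda>C v. w C" "\<lambda>C v. v \<in> C"] by simp
  also have "\<dots> = (\<Sum>C\<in>?Cl. real (card C) * w C)"
  proof (rule sum.cong[OF refl])
    fix C assume "C \<in> ?Cl"
    then have "{v\<in>{0..<n}. v \<in> C} = C"
      using clique_subset by fastforce
    then show "(\<Sum>v\<in>{v\<in>{0..<n}. v \<in> C}. w C) = real (card C) * w C"
      by simp
  qed
  also have "\<dots> \<le> (\<Sum>C\<in>?Cl. 2 * w C)"
    using card_clique_le_2[OF tf] w_nonneg by (intro sum_mono mult_right_mono) auto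
  also have "\<dots> = 2 * (\<Sum>C\<in>?Cl. w C)"
    by (rule sum_distrib_left[symmetric])
  finally show ?thesis
    by linarith
qed

lemma frac_clique_cover_number_ge_half:
  assumes "triangle_free n E"
  shows "real n / 2 \<le> frac_clique_cover_number n E"
  unfolding frac_clique_cover_number_def
proof (rule cINF_greatest)
  show "{w. frac_clique_cover n E w} \<noteq> {}"
    using frac_clique_cover_ones by blast
qed (use frac_clique_cover_weight_ge_half[OF assms] in blast)

lemma broadcast_rate_le_beta_t:
  assumes "1 \<le> t"
  shows "broadcast_rate n E \<le> real (beta_t n E t) / real t"
  unfolding broadcast_rate_def
  using assms by (intro cINF_lower bdd_belowI2[where m = 0]) auto

lemma finite_messages: "finite (messages n t)"
  unfolding messages_def by (intro finite_PiE) auto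

lemma messages_nonempty: "messages n t \<noteq> {}"
proof -
  have "(\<lambda>i\<in>{0..<n}. 0) \<in> messages n t"
    unfolding messages_def by auto
  then show ?thesis
    by blast
qed

lemma beta_t_le_of_decodable:
  fixes enc :: "(nat \<Rightarrow> nat) \<Rightarrow> 'c"
    and dec :: "nat \<Rightarrow> 'c \<Rightarrow> (nat \<Rightarrow> nat) \<Rightarrow> nat"
  assumes card_codewords: "card (enc ` messages n t) \<le> 2 ^ r"
    and decodes: "\<And>i x. i < n \<Longrightarrow> x \<in> messages n t \<Longrightarrow>
        dec i (enc x) (restrict x (nbrs n E i)) = x i"
  shows "beta_t n E t \<le> r"
proof -
  let ?S = "enc ` messages n t"
  obtain h :: "'c \<Rightarrow> nat" where h: "inj_on h ?S"
    using finite_imp_inj_to_nat_seg[OF finite_imageI[OF finite_messages]] by metis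
  have "ic_solution n E t (h \<circ> enc)"
    unfolding ic_solution_def
  proof (intro allI impI exI ballI)
    fix i x assume "i < n" "x \<in> messages n t"
    then show "dec i (the_inv_into ?S h ((h \<circ> enc) x)) (restrict x (nbrs n E i)) = x i"
      using decodes h by (simp add: the_inv_into_f_f)
  qed
  moreover have "card ((h \<circ> enc) ` messages n t) \<le> 2 ^ r"
    using card_codewords card_image[OF h] by (simp add: image_image)
  then have "nat \<lceil>log 2 (real (card ((h \<circ> enc) ` messages n t)))\<rceil> \<le> r"
    using log2_of_power_le[of _ r] finite_messages messages_nonempty
    by (simp add: nat_le_iff ceiling_le_iff card_gt_0_iff)
  ultimately show ?thesis
    unfolding beta_t_def by (intro cINF_lower2[where x = "h \<circ> enc"] bdd_belowI2[where m = 0]) auto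
qed

lemma sum_sum_eq_sum_card:
  fixes f :: "'a \<Rightarrow> 'b::comm_semiring_1"
  assumes "finite D" "finite V" "\<And>j. j \<in> D \<Longrightarrow> P j \<subseteq> V"
  shows "(\<Sum>j\<in>D. \<Sum>m\<in>P j. f m) = (\<Sum>m\<in>V. of_nat (card {j\<in>D. m \<in> P j}) * f m)"
proof -
  have "(\<Sum>j\<in>D. \<Sum>m\<in>P j. f m) = (\<Sum>j\<in>D. \<Sum>m\<in>{m\<in>V. m \<in> P j}. f m)"
    using assms(3) by (intro sum.cong refl) (metis Collect_conj_eq Collect_mem_eq inf.absorb2)
  also have "\<dots> = (\<Sum>m\<in>V. \<Sum>j\<in>{j\<in>D. m \<in> P j}. f m)"
    by (rule sum.swap_restrict[OF assms(1,2)])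
  finally show ?thesis
    by simp
qed

text \<open>Read over \<open>GF(2)\<close>: the closed neighbourhood of every vertex \<open>i\<close> is the sum of the
  sets \<open>P j\<close>, \<open>j \<in> D i\<close>, chosen among \<open>r\<close> given sets \<open>P 0, \<dots>, P (r - 1)\<close>.\<close>

definition parity_cover ::
    "nat \<Rightarrow> (nat \<Rightarrow> nat \<Rightarrow> bool) \<Rightarrow> nat \<Rightarrow> (nat \<Rightarrow> nat set) \<Rightarrow> (nat \<Rightarrow> nat set) \<Rightarrow> bool" where
  "parity_cover n E r P D \<longleftrightarrow>
     (\<forall>j<r. P j \<subseteq> {..<n}) \<and>
     (\<forall>i<n. D i \<subseteq> {..<r} \<and> (\<forall>m<n. (m = i \<or> E i m) \<longleftrightarrow> odd (card {j \<in> D i. m \<in> P j})))"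

lemma parity_cover_sum_mod_2:
  fixes x :: "nat \<Rightarrow> nat"
  assumes cover: "parity_cover n E r P D" and "\<not> E i i" "i < n"
  shows "(\<Sum>j\<in>D i. \<Sum>m\<in>P j. x m) mod 2 = (x i + (\<Sum>m\<in>nbrs n E i. x m)) mod 2"
proof -
  have D: "D i \<subseteq> {..<r}" and P_subset: "\<And>j. j \<in> D i \<Longrightarrow> P j \<subseteq> {..<n}"
    and odd_card: "\<And>m. m < n \<Longrightarrow> (m = i \<or> E i m) \<longleftrightarrow> odd (card {j \<in> D i. m \<in> P j})"
    using cover \<open>i < n\<close> unfolding parity_cover_def by blast+
  have card_mod_2: "card {j \<in> D i. m \<in> P j} * x m mod 2 = of_bool (m = i \<or> E i m) * x m mod 2"
    if "m \<in> {..<n}" for m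
  proof -
    have "card {j \<in> D i. m \<in> P j} mod 2 = of_bool (m = i \<or> E i m)"
      using odd_card[of m] that
      by (cases "m = i \<or> E i m") (simp_all add: odd_iff_mod_2_eq_one even_iff_mod_2_eq_zero)
    then show ?thesis
      by (metis mod_mult_left_eq)
  qed
  have closed_nbhd: "{..<n} \<inter> {m. m = i \<or> E i m} = insert i (nbrs n E i)"
    using \<open>i < n\<close> by (auto simp: nbrs_def)
  have "(\<Sum>j\<in>D i. \<Sum>m\<in>P j. x m) = (\<Sum>m<n. of_nat (card {j \<in> D i. m \<in> P j}) * x m)"
    by (rule sum_sum_eq_sum_card[of "D i" "{..<n}" P x,
          OF finite_subset[OF D finite_lessThan] finite_lessThan P_subset])
  then have "(\<Sum>j\<in>D i. \<Sum>m\<in>P j. x m) mod 2 = (\<Sum>m<n. card {j \<in> D i. m \<in> P j} * x m mod 2) mod 2"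
    by (simp add: mod_sum_eq)
  also have "\<dots> = (\<Sum>m<n. of_bool (m = i \<or> E i m) * x m mod 2) mod 2"
    by (rule arg_cong[where f = "\<lambda>s. s mod 2"], rule sum.cong[OF refl card_mod_2])
  also have "\<dots> = (\<Sum>m<n. of_bool (m = i \<or> E i m) * x m) mod 2"
    by (rule mod_sum_eq)
  also have "(\<Sum>m<n. of_bool (m = i \<or> E i m) * x m) = (\<Sum>m\<in>insert i (nbrs n E i). x m)"
    unfolding sum_of_bool_mult_eq[OF finite_lessThan] closed_nbhd ..
  also have "\<dots> = x i + (\<Sum>m\<in>nbrs n E i. x m)"
    using \<open>\<not> E i i\<close> by (simp add: nbrs_def)
  finally show ?thesis .
qed

lemma parity_cover_decoding:
  assumes "parity_cover n E r P D" and "\<not> E i i" "i < n" "x \<in> messages n 1"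
  shows "((\<Sum>j\<in>D i. (\<Sum>m\<in>P j. x m) mod 2) + (\<Sum>m\<in>nbrs n E i. x m)) mod 2 = x i"
proof -
  have "((\<Sum>j\<in>D i. (\<Sum>m\<in>P j. x m) mod 2) + (\<Sum>m\<in>nbrs n E i. x m)) mod 2
      = ((\<Sum>j\<in>D i. \<Sum>m\<in>P j. x m) mod 2 + (\<Sum>m\<in>nbrs n E i. x m)) mod 2"
    by (metis mod_add_left_eq mod_sum_eq)
  also have "\<dots> = (x i + 2 * (\<Sum>m\<in>nbrs n E i. x m)) mod 2"
    unfolding parity_cover_sum_mod_2[OF assms(1-3)] by (simp add: mod_add_left_eq mult_2 add.assoc)
  also have "\<dots> = x i"
    using \<open>x \<in> messages n 1\<close> \<open>i < n\<close> by (auto simp: messages_def PiE_def Pi_def)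
  finally show ?thesis .
qed

lemma broadcast_rate_le_of_parity_cover:
  assumes "undirected_graph n E" "parity_cover n E r P D"
  shows "broadcast_rate n E \<le> real r"
proof -
  let ?enc = "\<lambda>x. restrict (\<lambda>j. (\<Sum>m\<in>P j. x m) mod 2) {..<r}"
  let ?dec = "\<lambda>i p s. ((\<Sum>j\<in>D i. p j) + (\<Sum>m\<in>nbrs n E i. s m)) mod 2"
  have "?enc ` messages n 1 \<subseteq> {..<r} \<rightarrow>\<^sub>E {..<2}"
    by (rule image_subsetI, subst restrict_PiE_iff) simp
  then have "card (?enc ` messages n 1) \<le> 2 ^ r"
    using card_mono[OF finite_PiE[of "{..<r}" "\<lambda>_. {..<2::nat}"]] by (simp add: card_PiE)
  moreover have "?dec i (?enc x) (restrict x (nbrs n E i)) = x i"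
    if "i < n" "x \<in> messages n 1" for i x
  proof -
    have "D i \<subseteq> {..<r}" and "\<not> E i i"
      using assms that unfolding parity_cover_def undirected_graph_def by blast+
    then show ?thesis
      using parity_cover_decoding[OF assms(2) _ that] by (simp add: subset_eq)
  qed
  ultimately have "beta_t n E 1 \<le> r"
    by (rule beta_t_le_of_decodable[where dec = ?dec])
  then show ?thesis
    using broadcast_rate_le_beta_t[of 1 n E] by simp
qed

text \<open>Vertex \<open>c * m + l\<close> is the vertex \<open>l\<close> of the \<open>c\<close>-th copy.\<close>

definition graph_copies :: "nat \<Rightarrow> (nat \<Rightarrow> nat \<Rightarrow> bool) \<Rightarrow> nat \<Rightarrow> nat \<Rightarrow> bool" where
  "graph_copies m E v w \<longleftrightarrow> v div m = w div m \<and> E (v mod m) (w mod m)"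

lemma undirected_graph_copies:
  assumes "undirected_graph m E" "0 < m"
  shows "undirected_graph n (graph_copies m E)"
  using assms by (auto simp: undirected_graph_def graph_copies_def)

lemma triangle_free_copies:
  assumes "triangle_free m E" "0 < m"
  shows "triangle_free n (graph_copies m E)"
proof -
  have no_triangle: False if "graph_copies m E i j" "graph_copies m E j k" "graph_copies m E i k" for i j k
  proof -
    have "E (i mod m) (j mod m)" "E (j mod m) (k mod m)" "E (i mod m) (k mod m)"
      using that by (auto simp: graph_copies_def)
    moreover have "i mod m < m" "j mod m < m" "k mod m < m"
      using \<open>0 < m\<close> by auto
    ultimately show False
      using \<open>triangle_free m E\<close> unfolding triangle_free_def by blast
  qed
  then show ?thesis
    unfolding triangle_free_def by auto
qed

lemma mem_image_shift_iff:
  fixes c m v :: nat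
  assumes "0 < m" "A \<subseteq> {..<m}"
  shows "v \<in> (\<lambda>l. c * m + l) ` A \<longleftrightarrow> v div m = c \<and> v mod m \<in> A"
proof
  assume "v \<in> (\<lambda>l. c * m + l) ` A"
  then obtain l where "l \<in> A" and "v = c * m + l"
    by blast
  moreover have "l < m"
    using assms(2) \<open>l \<in> A\<close> by blast
  ultimately show "v div m = c \<and> v mod m \<in> A"
    using \<open>0 < m\<close> by simp
next
  assume "v div m = c \<and> v mod m \<in> A"
  then show "v \<in> (\<lambda>l. c * m + l) ` A"
    by (metis div_mult_mod_eq image_eqI mult.commute)
qed

lemma parity_cover_copies:
  assumes cover: "parity_cover m E r P D" and "0 < m" "0 < r"
  shows "parity_cover (k * m) (graph_copies m E) (k * r)
           (\<lambda>q. (\<lambda>l. q div r * m + l) ` P (q mod r)) (\<lambda>i. (\<lambda>j. i div m * r + j) ` D (i mod m))"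
  unfolding parity_cover_def
proof (intro conjI allI impI)
  fix q assume "q < k * r"
  then have "q div r < k" and "P (q mod r) \<subseteq> {..<m}"
    using cover \<open>0 < r\<close> by (auto simp: parity_cover_def less_mult_imp_div_less)
  then show "(\<lambda>l. q div r * m + l) ` P (q mod r) \<subseteq> {..<k * m}"
    by (auto dest!: subsetD intro: less_le_trans[OF _ mult_le_mono1[of "Suc (q div r)" k m]])
next
  fix i assume "i < k * m"
  define c l where "c = i div m" and "l = i mod m"
  have "c < k" "l < m"
    using \<open>i < k * m\<close> \<open>0 < m\<close> by (auto simp: c_def l_def less_mult_imp_div_less)
  then have D: "D l \<subseteq> {..<r}" and P: "\<And>j. j \<in> D l \<Longrightarrow> P j \<subseteq> {..<m}"
    and odd_card: "\<And>v. v < m \<Longrightarrow> (v = l \<or> E l v) \<longleftrightarrow> odd (card {j \<in> D l. v \<in> P j})"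
    using cover unfolding parity_cover_def by blast+
  show "(\<lambda>j. i div m * r + j) ` D (i mod m) \<subseteq> {..<k * r}"
    using D \<open>c < k\<close> by (auto simp: c_def[symmetric] l_def[symmetric] dest!: subsetD
        intro: less_le_trans[OF _ mult_le_mono1[of "Suc c" k r]])
  fix v assume "v < k * m"
  have "{q \<in> (\<lambda>j. c * r + j) ` D l. v \<in> (\<lambda>l. q div r * m + l) ` P (q mod r)}
      = (\<lambda>j. c * r + j) ` {j \<in> D l. v \<in> (\<lambda>l. c * m + l) ` P j}"
    using D by (force simp: subset_eq)
  also have "{j \<in> D l. v \<in> (\<lambda>l. c * m + l) ` P j} = {j \<in> D l. v div m = c \<and> v mod m \<in> P j}"
    using mem_image_shift_iff[OF \<open>0 < m\<close> P] by blast
  finally have "card {q \<in> (\<lambda>j. c * r + j) ` D l. v \<in> (\<lambda>l. q div r * m + l) ` P (q mod r)}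
      = card {j \<in> D l. v div m = c \<and> v mod m \<in> P j}"
    by (simp add: card_image inj_on_def)
  moreover have "v = i \<longleftrightarrow> v div m = c \<and> v mod m = l"
    unfolding c_def l_def by (metis div_mult_mod_eq)
  ultimately show "(v = i \<or> graph_copies m E i v) \<longleftrightarrow>
      odd (card {q \<in> (\<lambda>j. i div m * r + j) ` D (i mod m). v \<in> (\<lambda>l. q div r * m + l) ` P (q mod r)})"
    using odd_card[of "v mod m"] \<open>0 < m\<close>
    by (cases "v div m = c") (auto simp: graph_copies_def c_def[symmetric] l_def[symmetric])
qed

text \<open>The vertices are the vectors of \<open>GF(2)\<^sup>4\<close> in binary; two of them are adjacent if they
  differ in exactly one coordinate or in all four. This is the folded 5-cube, alias the
  Clebsch graph.\<close>

definition clebsch_graph :: "nat \<Rightarrow> nat \<Rightarrow> bool" where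
  "clebsch_graph v w \<longleftrightarrow> v < 16 \<and> w < 16 \<and> xor v w \<in> {1, 2, 4, 8, 15}"

lemma undirected_graph_clebsch: "undirected_graph 16 clebsch_graph"
  by (auto simp: undirected_graph_def clebsch_graph_def xor.commute)

lemma triangle_free_clebsch: "triangle_free 16 clebsch_graph"
  unfolding triangle_free_def clebsch_graph_def
proof clarify
  fix u v w :: nat
  assume uv: "xor u v \<in> {1, 2, 4, 8, 15}" and vw: "xor v w \<in> {1, 2, 4, 8, 15}"
    and uw: "xor u w \<in> {1, 2, 4, 8, 15}"
  have "\<forall>a\<in>{1, 2, 4, 8, 15}. \<forall>b\<in>{1, 2, 4, 8, 15}. xor a b \<notin> {1, 2, 4, 8, 15 :: nat}"
    by simp
  then have "xor (xor u v) (xor v w) \<notin> {1, 2, 4, 8, 15}"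
    using uv vw by blast
  moreover have "xor (xor u v) (xor v w) = xor u w"
    by (metis xor.assoc xor.left_commute xor_self_eq xor.right_neutral)
  ultimately show False
    using uw by simp
qed

text \<open>\<open>clebsch_decoding_list l\<close> lists the indices of the centres whose closed neighbourhoods
  sum, over \<open>GF(2)\<close>, to the closed neighbourhood of \<open>l\<close>.\<close>

definition clebsch_centre :: "nat \<Rightarrow> nat" where
  "clebsch_centre j = [0, 1, 2, 3, 4, 8] ! j"

definition clebsch_parity_set :: "nat \<Rightarrow> nat set" where
  "clebsch_parity_set j = insert (clebsch_centre j) {v. clebsch_graph (clebsch_centre j) v}"

definition clebsch_decoding_list :: "nat \<Rightarrow> nat list" where
  "clebsch_decoding_list l = [[0], [1], [2], [3], [4], [2, 3, 4], [1, 3, 4], [0, 3, 4], [5], [2, 3, 5],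
     [1, 3, 5], [0, 3, 5], [1, 2, 3, 4, 5], [0, 2, 3, 4, 5], [0, 1, 3, 4, 5], [0, 1, 2, 4, 5]] ! l"

lemma clebsch_decoding_lists_correct:
  "\<forall>l\<in>set [0..<16]. distinct (clebsch_decoding_list l) \<and>
     (\<forall>j\<in>set (clebsch_decoding_list l). j < 6) \<and>
     (\<forall>m\<in>set [0..<16]. (m = l \<or> clebsch_graph l m) \<longleftrightarrow>
        odd (length (filter (\<lambda>j. m = clebsch_centre j \<or> clebsch_graph (clebsch_centre j) m)
          (clebsch_decoding_list l))))"
  by code_simp

lemma parity_cover_clebsch:
  "parity_cover 16 clebsch_graph 6 clebsch_parity_set (\<lambda>l. set (clebsch_decoding_list l))"
  unfolding parity_cover_def
proof (intro conjI allI impI)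
  fix j :: nat assume "j < 6"
  then show "clebsch_parity_set j \<subseteq> {..<16}"
    by (auto simp: clebsch_parity_set_def clebsch_graph_def clebsch_centre_def less_Suc_eq numeral_eq_Suc)
next
  fix l :: nat assume "l < 16"
  then have l: "l \<in> set [0..<16]"
    by simp
  show "set (clebsch_decoding_list l) \<subseteq> {..<6}"
    using clebsch_decoding_lists_correct l by auto
  fix m :: nat assume "m < 16"
  then show "(m = l \<or> clebsch_graph l m) \<longleftrightarrow>
      odd (card {j \<in> set (clebsch_decoding_list l). m \<in> clebsch_parity_set j})"
    using clebsch_decoding_lists_correct l
    by (auto simp: clebsch_parity_set_def distinct_length_filter Int_commute Collect_conj_eq)
qed

theorem theorem4p1:
  shows "\<forall>N::nat. \<exists>n\<ge>N. \<exists>E :: nat \<Rightarrow> nat \<Rightarrow> bool.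
           undirected_graph n E \<and> triangle_free n E \<and>
           frac_clique_cover_number n E \<ge> real n / 2 \<and>
           broadcast_rate n E \<le> 3 / 8 * real n"
proof
  fix N :: nat
  let ?E = "graph_copies 16 clebsch_graph"
  have undirected: "undirected_graph (Suc N * 16) ?E"
    by (rule undirected_graph_copies[OF undirected_graph_clebsch]) simp
  have triangle_free: "triangle_free (Suc N * 16) ?E"
    by (rule triangle_free_copies[OF triangle_free_clebsch]) simp
  have "broadcast_rate (Suc N * 16) ?E \<le> real (Suc N * 6)"
    using broadcast_rate_le_of_parity_cover[OF undirected
        parity_cover_copies[OF parity_cover_clebsch, of "Suc N"]] by simp
  then show "\<exists>n\<ge>N. \<exists>E. undirected_graph n E \<and> triangle_free n E \<and>
      frac_clique_cover_number n E \<ge> real n / 2 \<and> broadcast_rate n E \<le> 3 / 8 * real n"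
    using undirected triangle_free frac_clique_cover_number_ge_half[OF triangle_free]
    by (intro exI[of _ "Suc N * 16"] conjI exI[of _ ?E]) auto
qed

end
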